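(* Let $X_1,X_2,\dots,X_n$ be i.i.d. real random variables. Fix $q$ with $0<q<1$ and let $q^*=2-q$. Assume $\mathbb{E}\exp_{q^*}(aX_1)$ is finite for small positive $a$. For $a>0$ with $0<\mathbb{E}\exp_{q^*}(aX_1)<\infty$ let $\theta(a)=\left[\mathbb{E}\exp_{q^*}(aX_1)\right]^{1-q}a$ (a strictly increasing function of $a$), let $\overline\theta=\sup_{a>0}\theta(a)\le+\infty$, and for $0<\theta<\overline\theta$ define $\Phi(\theta)=\ln_q\mathbb{E}\exp_{q^*}(aX_1)$, where $a$ is the value with $\theta(a)=\theta$. Then for all $x$, $$\mathrm{Prob}\left(\frac1n\sum_{k=1}^nX_k\ge x\right)\le\left[\exp_q(-I(x))\right]^n,$$ where $$I(x)=\sup_{0<\theta<\overline\theta}\{\theta x-\Phi(\theta)\}.$$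
   Context: For $q\in(0,2)$, $q\ne1$: $\ln_q(u)=\frac{1}{1-q}(u^{1-q}-1)$ for $u>0$, and $\exp_q(u)=[1+(1-q)u]_+^{1/(1-q)}$ for real $u$ (value in $[0,+\infty]$), where $[u]_+=\max(u,0)$. *)

theory Defs
  imports "HOL-Probability.Probability"
begin

text \<open>Tsallis q-logarithm (for u > 0, q \<noteq> 1).\<close>
definition lnq :: "real \<Rightarrow> real \<Rightarrow> real" where
  "lnq q u = (u powr (1 - q) - 1) / (1 - q)"

definition expq :: "real \<Rightarrow> real \<Rightarrow> ennreal" where
  "expq q u = (if q = 1 then ennreal (exp u)
     else if 1 + (1 - q) * u > 0 then ennreal ((1 + (1 - q) * u) powr (1 / (1 - q)))
     else if q < 1 then 0 else \<infinity>)"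

text \<open>Extension to extended reals by the limits at \<plusminus>\<infinity>.\<close>
definition expq_ereal :: "real \<Rightarrow> ereal \<Rightarrow> ennreal" where
  "expq_ereal q t = (case t of ereal u \<Rightarrow> expq q u | PInfty \<Rightarrow> \<infinity> | MInfty \<Rightarrow> 0)"

definition mgfq :: "'a measure \<Rightarrow> ('a \<Rightarrow> real) \<Rightarrow> real \<Rightarrow> real \<Rightarrow> ennreal" where
  "mgfq M Y q a = (\<integral>\<^sup>+ \<omega>. expq (2 - q) (a * Y \<omega>) \<partial>M)"

definition admiss :: "'a measure \<Rightarrow> ('a \<Rightarrow> real) \<Rightarrow> real \<Rightarrow> real set" where
  "admiss M Y q = {a. a > 0 \<and> 0 < mgfq M Y q a \<and> mgfq M Y q a < \<infinity>}"

definition thetaq :: "'a measure \<Rightarrow> ('a \<Rightarrow> real) \<Rightarrow> real \<Rightarrow> real \<Rightarrow> real" where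
  "thetaq M Y q a = (enn2real (mgfq M Y q a)) powr (1 - q) * a"

definition theta_bar :: "'a measure \<Rightarrow> ('a \<Rightarrow> real) \<Rightarrow> real \<Rightarrow> ereal" where
  "theta_bar M Y q = (SUP a\<in>admiss M Y q. ereal (thetaq M Y q a))"

definition Phiq :: "'a measure \<Rightarrow> ('a \<Rightarrow> real) \<Rightarrow> real \<Rightarrow> real \<Rightarrow> real" where
  "Phiq M Y q \<theta> = lnq q (enn2real (mgfq M Y q
      (THE a. a \<in> admiss M Y q \<and> thetaq M Y q a = \<theta>)))"

definition Iq :: "'a measure \<Rightarrow> ('a \<Rightarrow> real) \<Rightarrow> real \<Rightarrow> real \<Rightarrow> ereal" where
  "Iq M Y q x = (SUP \<theta>\<in>{\<theta>. 0 < \<theta> \<and> ereal \<theta> < theta_bar M Y q}.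
                    ereal (\<theta> * x - Phiq M Y q \<theta>))"

end

theory Submission
  imports Defs "HOL-Real_Asymp.Real_Asymp"
begin

text \<open>
  Fix an admissible \<open>a\<close>. By AM-GM, on the event that the sample mean is at least \<open>x\<close> we have
  \<open>exp\<^sub>q\<^sub>*(a x)\<^sup>n \<le> \<Prod>\<^sub>k exp\<^sub>q\<^sub>*(a X\<^sub>k)\<close>; Markov's inequality and independence bound the probability by
  \<open>(E exp\<^sub>q\<^sub>*(a X\<^sub>1) / exp\<^sub>q\<^sub>*(a x))\<^sup>n\<close>, and this ratio is exactly \<open>exp\<^sub>q(-(\<theta>(a) x - \<Phi>(\<theta>(a))))\<close>.

  Every \<open>\<theta>\<close> strictly between \<open>0\<close> and \<open>sup\<^sub>a \<theta>(a)\<close> is some \<open>\<theta>(a)\<close>: we have \<open>\<theta>(a) = G(a)\<^bsup>1-q\<^esup>\<close> for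
  \<open>G(a) = a\<^bsup>1/(1-q)\<^esup> E exp\<^sub>q\<^sub>*(a X\<^sub>1) = E (1/a - (1-q) X\<^sub>1)\<^bsup>-1/(1-q)\<^esup>\<close>, whose integrand increases with \<open>a\<close>.
  So \<open>G\<close> is strictly increasing on the admissible interval, continuous there by monotone
  convergence, and tends to \<open>0\<close> at \<open>0\<close>. The bounds for all \<open>\<theta>\<close> then combine into the bound with
  \<open>I(x)\<close> by continuity of \<open>exp\<^sub>q\<close>.
\<close>

lemma expq_gt_1:
  assumes "1 < r"
  shows "expq r u = (if 0 < 1 + (1 - r) * u then ennreal ((1 + (1 - r) * u) powr (1 / (1 - r)))
                     else \<infinity>)"
  using assms by (simp add: expq_def)

lemma expq_lt_1:
  assumes "r < 1"
  shows "expq r u = ennreal (max 0 (1 + (1 - r) * u) powr (1 / (1 - r)))"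
  using assms by (auto simp: expq_def)

lemma expq_pos: "1 \<le> r \<Longrightarrow> 0 < expq r u"
  by (auto simp: expq_def)

lemma expq_zero [simp]: "expq r 0 = 1"
  by (simp add: expq_def)

lemma mono_expq: "mono (expq r)"
proof (rule monoI)
  fix u v :: real
  assume "u \<le> v"
  consider "r = 1" | "r < 1" | "1 < r" by linarith
  then show "expq r u \<le> expq r v"
  proof cases
    case 1
    then show ?thesis using \<open>u \<le> v\<close> by (simp add: expq_def ennreal_leI)
  next
    case 2
    then have "max 0 (1 + (1 - r) * u) \<le> max 0 (1 + (1 - r) * v)"
      using \<open>u \<le> v\<close> by (simp add: mult_left_mono max.coboundedI2)
    then show ?thesis using 2 by (simp add: expq_lt_1 ennreal_leI powr_mono2)
  next
    case 3
    have "1 + (1 - r) * v \<le> 1 + (1 - r) * u"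
      using 3 \<open>u \<le> v\<close> by (simp add: mult_left_mono_neg)
    show ?thesis
    proof (cases "0 < 1 + (1 - r) * v")
      case True
      with \<open>1 + (1 - r) * v \<le> 1 + (1 - r) * u\<close> have "0 < 1 + (1 - r) * u" by linarith
      with True 3 \<open>1 + (1 - r) * v \<le> 1 + (1 - r) * u\<close> show ?thesis
        by (simp add: expq_gt_1 ennreal_leI powr_mono2')
    qed (use 3 in \<open>simp add: expq_gt_1\<close>)
  qed
qed

lemma measurable_expq [measurable]:
  "f \<in> borel_measurable M \<Longrightarrow> (\<lambda>x. expq r (f x)) \<in> borel_measurable M"
  unfolding expq_def by (cases "r = 1"; cases "r < 1") simp_all

lemma isCont_expq_power:
  assumes "r < 1"
  shows "isCont (\<lambda>u. expq r u ^ n) u"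
proof -
  have "continuous_on UNIV (\<lambda>u. ennreal ((max 0 (1 + (1 - r) * u) powr (1 / (1 - r))) ^ n))"
    using assms by (intro continuous_on_ennreal continuous_on_power continuous_on_powr' continuous_intros) auto
  moreover have "(\<lambda>u. expq r u ^ n) = (\<lambda>u. ennreal ((max 0 (1 + (1 - r) * u) powr (1 / (1 - r))) ^ n))"
    using assms by (simp add: expq_lt_1 fun_eq_iff ennreal_power)
  ultimately show ?thesis by (simp add: continuous_on_eq_continuous_at)
qed

lemma prod_le_mean_power:
  fixes y :: "'a \<Rightarrow> real"
  assumes "finite A" "A \<noteq> {}" "\<And>k. k \<in> A \<Longrightarrow> 0 \<le> y k"
  shows "(\<Prod>k\<in>A. y k) \<le> ((\<Sum>k\<in>A. y k) / card A) ^ card A"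
proof -
  have "(\<Prod>k\<in>A. y k) powr (1 / card A) \<le> (\<Sum>k\<in>A. y k) / card A"
    using arith_geom_mean[OF assms] by (simp add: sum_divide_distrib)
  then have "((\<Prod>k\<in>A. y k) powr (1 / card A)) ^ card A \<le> ((\<Sum>k\<in>A. y k) / card A) ^ card A"
    by (rule power_mono) simp
  moreover have "((\<Prod>k\<in>A. y k) powr (1 / card A)) ^ card A = (\<Prod>k\<in>A. y k)"
    using assms by (simp add: powr_realpow'[symmetric] powr_powr prod_nonneg card_gt_0_iff)
  ultimately show ?thesis by simp
qed

lemma expq_mean_power_le_prod:
  assumes "1 < r" "finite A" "A \<noteq> {}"
  shows "expq r ((\<Sum>k\<in>A. u k) / card A) ^ card A \<le> (\<Prod>k\<in>A. expq r (u k))"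
proof (cases "\<exists>k\<in>A. 1 + (1 - r) * u k \<le> 0")
  case True
  then obtain k where "k \<in> A" "expq r (u k) = \<infinity>" using assms(1) by (auto simp: expq_gt_1)
  moreover have "\<forall>i\<in>A. expq r (u i) \<noteq> 0"
    using expq_pos[of r] assms(1) by (metis less_imp_le less_irrefl)
  ultimately have "(\<Prod>k\<in>A. expq r (u k)) = \<infinity>"
    using assms(2) by (auto simp: ennreal_prod_eq_top)
  then show ?thesis by simp
next
  case False
  define y where "y k = 1 + (1 - r) * u k" for k
  define p where "p = 1 / (1 - r)"
  have y: "0 < y k" if "k \<in> A" for k using False that unfolding y_def by auto
  have "(\<Sum>k\<in>A. y k) = card A + (1 - r) * (\<Sum>k\<in>A. u k)"
    by (simp add: y_def sum.distrib sum_distrib_left)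
  then have mean: "1 + (1 - r) * ((\<Sum>k\<in>A. u k) / card A) = (\<Sum>k\<in>A. y k) / card A"
    using assms by (simp add: field_simps)
  have mean_pos: "0 < (\<Sum>k\<in>A. y k) / card A"
    using y assms by (simp add: sum_pos card_gt_0_iff)
  have "(((\<Sum>k\<in>A. y k) / card A) ^ card A) powr p \<le> (\<Prod>k\<in>A. y k) powr p"
    using prod_le_mean_power[of A y] y assms
    by (intro powr_mono2') (auto simp: p_def prod_pos less_imp_le)
  moreover have "(m ^ n) powr p = (m powr p) ^ n" if "0 < m" for m :: real and n
  proof -
    have "(m ^ n) powr p = (m powr p) powr n" using that by (simp add: powr_realpow[symmetric] powr_powr mult.commute)
    then show ?thesis using that by (simp add: powr_realpow)
  qed
  ultimately have "(((\<Sum>k\<in>A. y k) / card A) powr p) ^ card A \<le> (\<Prod>k\<in>A. y k powr p)"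
    using mean_pos by (simp add: prod_powr_distrib)
  moreover have "(\<Prod>k\<in>A. expq r (u k)) = ennreal (\<Prod>k\<in>A. y k powr p)"
    using y assms(1) by (simp add: expq_gt_1 y_def p_def prod_ennreal)
  ultimately show ?thesis
    using mean mean_pos assms(1) by (simp add: expq_gt_1 p_def ennreal_power ennreal_leI)
qed

lemma expq_2_minus:
  assumes "q < 1"
  shows "expq (2 - q) u = (if (1 - q) * u < 1 then ennreal ((1 - (1 - q) * u) powr (- 1 / (1 - q)))
                           else \<infinity>)"
proof -
  have "1 + (1 - (2 - q)) * u = 1 - (1 - q) * u" "1 / (1 - (2 - q)) = - 1 / (1 - q)"
    using assms by (auto simp: field_simps)
  then show ?thesis using assms by (simp add: expq_gt_1)
qed

lemma expq_neg_dual: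
  assumes "q < 1" "0 < m"
  shows "expq q (- (m powr (1 - q) * a * x - lnq q m)) = ennreal m / expq (2 - q) (a * x)"
proof -
  define c where "c = 1 - q"
  have c: "0 < c" using assms(1) unfolding c_def by simp
  have base: "1 + c * (- (m powr c * a * x - lnq q m)) = m powr c * (1 - c * (a * x))"
    using c by (simp add: lnq_def c_def[symmetric] field_simps)
  have lhs: "expq q (- (m powr (1 - q) * a * x - lnq q m))
      = ennreal (max 0 (m powr c * (1 - c * (a * x))) powr (1 / c))"
    by (simp only: expq_lt_1[OF assms(1)] c_def[symmetric] base)
  show ?thesis
  proof (cases "c * (a * x) < 1")
    case True
    have "(m powr c * (1 - c * (a * x))) powr (1 / c) = m * (1 - c * (a * x)) powr (1 / c)"
      using True c assms(2) by (simp add: powr_mult powr_powr)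
    also have "\<dots> = m / (1 - c * (a * x)) powr (- 1 / c)"
      using True by (simp add: powr_minus_divide divide_simps powr_minus)
    finally show ?thesis
      unfolding lhs using True assms c by (simp add: expq_2_minus c_def[symmetric] divide_ennreal)
  next
    case False
    then have "m powr c * (1 - c * (a * x)) \<le> 0"
      using assms(2) by (simp add: mult_nonneg_nonpos)
    then show ?thesis
      unfolding lhs using False assms(1) by (simp add: expq_2_minus c_def[symmetric])
  qed
qed

lemma le_expq_ereal_neg_SUP:
  fixes f :: "'b \<Rightarrow> real" and P :: ennreal
  assumes "q < 1" "n \<noteq> 0" and bound: "\<And>\<theta>. \<theta> \<in> S \<Longrightarrow> P \<le> expq q (- f \<theta>) ^ n"
  shows "P \<le> expq_ereal q (- (SUP \<theta>\<in>S. ereal (f \<theta>))) ^ n"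
proof (cases "SUP \<theta>\<in>S. ereal (f \<theta>)" rule: ereal_cases)
  case (real r)
  have near: "P \<le> expq q (- (r - \<epsilon>)) ^ n" if "0 < \<epsilon>" for \<epsilon>
  proof -
    have "ereal (r - \<epsilon>) < (SUP \<theta>\<in>S. ereal (f \<theta>))" using real that by simp
    then obtain \<theta> where "\<theta> \<in> S" "r - \<epsilon> < f \<theta>" by (auto simp: less_SUP_iff)
    then show ?thesis
      using bound[of \<theta>] mono_expq[of q]
      by (meson le_less monoD neg_le_iff_le order_trans power_mono zero_le)
  qed
  have "\<forall>\<^sub>F \<epsilon> in at_right 0. P \<le> expq q (- (r - \<epsilon>)) ^ n"
    using eventually_at_right_less[of "0::real"] by (rule eventually_mono) (rule near)
  moreover have "((\<lambda>\<epsilon>. expq q (- (r - \<epsilon>)) ^ n) \<longlongrightarrow> expq q (- (r - 0)) ^ n) (at_right 0)"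
    by (intro isCont_tendsto_compose[OF isCont_expq_power[OF assms(1)]] tendsto_intros)
  ultimately have "P \<le> expq q (- r) ^ n"
    by (intro tendsto_lowerbound[where F = "at_right 0"]) auto
  then show ?thesis using real by (simp add: expq_ereal_def)
next
  case PInf
  then have "ereal (1 / (1 - q)) < (SUP \<theta>\<in>S. ereal (f \<theta>))" by simp
  then obtain \<theta> where "\<theta> \<in> S" "1 / (1 - q) < f \<theta>" by (auto simp: less_SUP_iff)
  then have "expq q (- f \<theta>) = 0" using assms(1) by (simp add: expq_lt_1 field_simps)
  then show ?thesis using bound[OF \<open>\<theta> \<in> S\<close>] assms(2) by (simp add: power_0_left)
next
  case MInf
  then show ?thesis using assms(2) by (simp add: expq_ereal_def)
qed

text \<open>\<open>a\<^bsup>1/(1-q)\<^esup> exp\<^sub>2\<^sub>-\<^sub>q(a y)\<close> (see scaled_expq_eq), in a form that is visibly increasing in \<open>a\<close>.\<close>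
definition scaled_expq :: "real \<Rightarrow> real \<Rightarrow> real \<Rightarrow> ennreal" where
  "scaled_expq q a y = (if (1 - q) * y < 1 / a then ennreal ((1 / a - (1 - q) * y) powr (- 1 / (1 - q)))
                        else \<infinity>)"

lemma scaled_expq_eq:
  assumes "q < 1" "0 < a"
  shows "ennreal (a powr (1 / (1 - q))) * expq (2 - q) (a * y) = scaled_expq q a y"
proof -
  have dom: "(1 - q) * (a * y) < 1 \<longleftrightarrow> (1 - q) * y < 1 / a"
    using assms by (simp add: field_simps)
  show ?thesis
  proof (cases "(1 - q) * y < 1 / a")
    case True
    have "(1 / a - (1 - q) * y) powr (- 1 / (1 - q))
        = ((1 - (1 - q) * (a * y)) / a) powr (- 1 / (1 - q))"
      using assms by (simp add: field_simps)
    also have "\<dots> = a powr (1 / (1 - q)) * (1 - (1 - q) * (a * y)) powr (- 1 / (1 - q))"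
      using True dom assms by (simp add: powr_divide powr_minus_divide divide_simps powr_minus)
    finally show ?thesis
      using True dom assms by (simp add: expq_2_minus scaled_expq_def ennreal_mult[symmetric])
  next
    case False
    then show ?thesis using dom assms by (simp add: expq_2_minus scaled_expq_def ennreal_mult_top)
  qed
qed

lemma scaled_expq_mono:
  assumes "q < 1" "0 < a" "a \<le> b"
  shows "scaled_expq q a y \<le> scaled_expq q b y"
proof (cases "(1 - q) * y < 1 / b")
  case True
  have "1 / b \<le> 1 / a" using assms by (simp add: frac_le)
  then show ?thesis
    using True assms(1) by (auto simp: scaled_expq_def ennreal_leI intro!: powr_mono2')
qed (simp add: scaled_expq_def)

lemma scaled_expq_strict_mono:
  assumes "q < 1" "0 < a" "a < b" "(1 - q) * y < 1 / b"
  shows "scaled_expq q a y < scaled_expq q b y"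
proof -
  have "1 / b < 1 / a" using assms by (simp add: frac_less2)
  then have "(1 / a - (1 - q) * y) powr (- 1 / (1 - q)) < (1 / b - (1 - q) * y) powr (- 1 / (1 - q))"
    using assms by (intro powr_less_mono2_neg) auto
  then show ?thesis using assms \<open>1 / b < 1 / a\<close> by (simp add: scaled_expq_def ennreal_less_iff)
qed

lemma tendsto_scaled_expq:
  assumes "q < 1" "(u \<longlongrightarrow> s) F" "0 < s" "(1 - q) * y < 1 / s"
  shows "((\<lambda>k. scaled_expq q (u k) y) \<longlongrightarrow> scaled_expq q s y) F"
proof -
  have lim: "((\<lambda>k. 1 / u k - (1 - q) * y) \<longlongrightarrow> 1 / s - (1 - q) * y) F"
    using assms by (intro tendsto_intros) auto
  then have "((\<lambda>k. ennreal ((1 / u k - (1 - q) * y) powr (- 1 / (1 - q))))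
      \<longlongrightarrow> scaled_expq q s y) F"
    using assms by (auto simp: scaled_expq_def intro!: tendsto_intros)
  moreover have "\<forall>\<^sub>F k in F. 0 < 1 / u k - (1 - q) * y"
    using lim assms(4) by (intro order_tendstoD) auto
  then have "\<forall>\<^sub>F k in F. ennreal ((1 / u k - (1 - q) * y) powr (- 1 / (1 - q))) = scaled_expq q (u k) y"
    by eventually_elim (simp add: scaled_expq_def)
  ultimately show ?thesis by (rule Lim_transform_eventually)
qed

lemma measurable_scaled_expq [measurable]:
  assumes [measurable]: "f \<in> borel_measurable M"
  shows "(\<lambda>x. scaled_expq q a (f x)) \<in> borel_measurable M"
  unfolding scaled_expq_def by measurable

locale q_moment = prob_space M for M :: "'a measure" +
  fixes Y :: "'a \<Rightarrow> real" and q :: real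
  assumes measurable_Y [measurable]: "Y \<in> borel_measurable M"
    and q_less_1: "q < 1"
begin

definition scaled_mgf :: "real \<Rightarrow> ennreal" where
  "scaled_mgf a = (\<integral>\<^sup>+\<omega>. scaled_expq q a (Y \<omega>) \<partial>M)"

lemma mgfq_pos: "0 < mgfq M Y q a"
proof (rule ccontr)
  assume "\<not> 0 < mgfq M Y q a"
  then have "mgfq M Y q a = 0" by (simp add: not_less)
  then have "AE \<omega> in M. expq (2 - q) (a * Y \<omega>) = 0"
    unfolding mgfq_def by (subst (asm) nn_integral_0_iff_AE) auto
  moreover have "expq (2 - q) u \<noteq> 0" for u
    using expq_pos[of "2 - q" u] q_less_1 by simp
  ultimately show False using AE_False by auto
qed

lemma scaled_mgf_eq: "0 < a \<Longrightarrow> scaled_mgf a = ennreal (a powr (1 / (1 - q))) * mgfq M Y q a"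
  unfolding scaled_mgf_def mgfq_def
  by (subst nn_integral_cmult[symmetric]) (auto simp: scaled_expq_eq[OF q_less_1])

lemma admiss_iff_scaled_mgf: "a \<in> admiss M Y q \<longleftrightarrow> 0 < a \<and> scaled_mgf a < \<infinity>"
  using mgfq_pos[of a]
  by (auto simp: admiss_def scaled_mgf_eq ennreal_mult_less_top top.not_eq_extremum)

lemma admissD:
  assumes "a \<in> admiss M Y q"
  shows "0 < a" "0 < enn2real (mgfq M Y q a)"
  using assms by (auto simp: admiss_def enn2real_positive_iff)

lemma thetaq_eq_scaled_mgf:
  assumes "a \<in> admiss M Y q"
  shows "thetaq M Y q a = enn2real (scaled_mgf a) powr (1 - q)"
proof -
  note a = admissD[OF assms]
  then have "enn2real (scaled_mgf a) powr (1 - q) = (a powr (1 / (1 - q))) powr (1 - q) * enn2real (mgfq M Y q a) powr (1 - q)"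
    by (simp add: scaled_mgf_eq enn2real_mult powr_mult)
  also have "\<dots> = thetaq M Y q a"
    using a q_less_1 by (simp add: thetaq_def powr_powr)
  finally show ?thesis by simp
qed

lemma scaled_mgf_eq_thetaq:
  assumes "a \<in> admiss M Y q"
  shows "scaled_mgf a = ennreal (thetaq M Y q a powr (1 / (1 - q)))"
  using assms q_less_1
  by (simp add: thetaq_eq_scaled_mgf powr_powr admiss_iff_scaled_mgf less_top[symmetric] ennreal_enn2real_if)

lemma scaled_mgf_mono: "0 < a \<Longrightarrow> a \<le> b \<Longrightarrow> scaled_mgf a \<le> scaled_mgf b"
  unfolding scaled_mgf_def by (intro nn_integral_mono scaled_expq_mono[OF q_less_1])

lemma admiss_downward_closed: "b \<in> admiss M Y q \<Longrightarrow> 0 < a \<Longrightarrow> a \<le> b \<Longrightarrow> a \<in> admiss M Y q"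
  using scaled_mgf_mono by (auto simp: admiss_iff_scaled_mgf intro: le_less_trans)

lemma AE_admiss_domain: "b \<in> admiss M Y q \<Longrightarrow> AE \<omega> in M. (1 - q) * Y \<omega> < 1 / b"
proof -
  assume "b \<in> admiss M Y q"
  then have "AE \<omega> in M. scaled_expq q b (Y \<omega>) \<noteq> \<infinity>"
    by (intro nn_integral_noteq_infinite) (auto simp: admiss_iff_scaled_mgf scaled_mgf_def)
  then show ?thesis by eventually_elim (auto simp: scaled_expq_def split: if_splits)
qed

lemma scaled_mgf_strict_mono:
  assumes "a \<in> admiss M Y q" "b \<in> admiss M Y q" "a < b"
  shows "scaled_mgf a < scaled_mgf b"
  unfolding scaled_mgf_def
proof (rule nn_integral_less)
  show "(\<integral>\<^sup>+ \<omega>. scaled_expq q a (Y \<omega>) \<partial>M) \<noteq> \<infinity>"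
    using assms(1) by (auto simp: admiss_iff_scaled_mgf scaled_mgf_def)
  show "AE \<omega> in M. scaled_expq q a (Y \<omega>) \<le> scaled_expq q b (Y \<omega>)"
    using assms by (intro AE_I2 scaled_expq_mono[OF q_less_1]) (auto simp: admiss_def)
  have strict: "AE \<omega> in M. scaled_expq q a (Y \<omega>) < scaled_expq q b (Y \<omega>)"
    using AE_admiss_domain[OF assms(2)]
    by eventually_elim (use assms in \<open>auto intro!: scaled_expq_strict_mono[OF q_less_1] simp: admiss_def\<close>)
  then show "\<not> (AE \<omega> in M. scaled_expq q b (Y \<omega>) \<le> scaled_expq q a (Y \<omega>))"
  proof (intro notI)
    assume "AE \<omega> in M. scaled_expq q b (Y \<omega>) \<le> scaled_expq q a (Y \<omega>)"
    with strict have "AE \<omega> in M. False" by eventually_elim auto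
    then show False using AE_False by simp
  qed
qed simp_all

lemma strict_mono_on_thetaq: "strict_mono_on (admiss M Y q) (thetaq M Y q)"
proof (rule strict_mono_onI)
  fix a b assume ab: "a \<in> admiss M Y q" "b \<in> admiss M Y q" "a < b"
  then have "enn2real (scaled_mgf a) < enn2real (scaled_mgf b)"
    using scaled_mgf_strict_mono by (simp add: admiss_iff_scaled_mgf enn2real_less_iff)
  then show "thetaq M Y q a < thetaq M Y q b"
    using ab q_less_1 by (simp add: thetaq_eq_scaled_mgf powr_less_mono2)
qed

lemma Phiq_thetaq:
  assumes "a \<in> admiss M Y q"
  shows "Phiq M Y q (thetaq M Y q a) = lnq q (enn2real (mgfq M Y q a))"
proof -
  have "(THE b. b \<in> admiss M Y q \<and> thetaq M Y q b = thetaq M Y q a) = a"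
    using assms strict_mono_on_imp_inj_on[OF strict_mono_on_thetaq]
    by (intro the1_equality) (auto dest: inj_onD)
  then show ?thesis by (simp add: Phiq_def)
qed

lemma mgfq_le_1_plus:
  assumes "0 \<le> a" "a \<le> b"
  shows "mgfq M Y q a \<le> 1 + mgfq M Y q b"
proof -
  have "expq (2 - q) (a * y) \<le> 1 + expq (2 - q) (b * y)" for y
  proof (cases "y \<le> 0")
    case True
    then have "expq (2 - q) (a * y) \<le> expq (2 - q) 0"
      using assms by (intro monoD[OF mono_expq]) (simp add: mult_nonneg_nonpos)
    then show ?thesis by (simp add: add_increasing2)
  next
    case False
    then have "expq (2 - q) (a * y) \<le> expq (2 - q) (b * y)"
      using assms by (intro monoD[OF mono_expq]) (simp add: mult_right_mono)
    then show ?thesis by (simp add: add_increasing)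
  qed
  then have "mgfq M Y q a \<le> (\<integral>\<^sup>+\<omega>. 1 + expq (2 - q) (b * Y \<omega>) \<partial>M)"
    unfolding mgfq_def by (intro nn_integral_mono)
  also have "\<dots> = 1 + mgfq M Y q b"
    by (subst nn_integral_add) (auto simp: mgfq_def emeasure_space_1)
  finally show ?thesis .
qed

lemma scaled_mgf_small:
  assumes "\<exists>\<epsilon>>0. \<forall>a. 0 < a \<and> a < \<epsilon> \<longrightarrow> mgfq M Y q a < \<infinity>" "0 < V"
  shows "\<exists>a>0. scaled_mgf a \<le> ennreal V"
proof -
  obtain a0 where a0: "0 < a0" "mgfq M Y q a0 < \<infinity>"
  proof -
    obtain \<epsilon> where "0 < \<epsilon>" "\<And>a. 0 < a \<Longrightarrow> a < \<epsilon> \<Longrightarrow> mgfq M Y q a < \<infinity>"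
      using assms(1) by blast
    then show ?thesis by (intro that[of "\<epsilon> / 2"]) auto
  qed
  define K where "K = enn2real (mgfq M Y q a0)"
  have K: "mgfq M Y q a0 = ennreal K" "0 \<le> K" using a0 by (auto simp: K_def less_top)
  define a where "a = min a0 ((V / (1 + K)) powr (1 - q))"
  have a: "0 < a" "a \<le> a0" using a0 assms(2) K by (auto simp: a_def)
  have "a powr (1 / (1 - q)) \<le> ((V / (1 + K)) powr (1 - q)) powr (1 / (1 - q))"
    using a q_less_1 by (intro powr_mono2) (auto simp: a_def)
  also have "\<dots> = V / (1 + K)" using q_less_1 assms(2) K by (simp add: powr_powr)
  finally have small: "a powr (1 / (1 - q)) * (1 + K) \<le> V" using K by (simp add: field_simps)
  have "scaled_mgf a \<le> ennreal (a powr (1 / (1 - q))) * (1 + ennreal K)"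
    using a mgfq_le_1_plus[of a a0] by (simp add: scaled_mgf_eq K mult_left_mono)
  also have "\<dots> = ennreal (a powr (1 / (1 - q)) * (1 + K))"
    using K by (simp add: ennreal_mult'')
  also have "\<dots> \<le> ennreal V"
    using small by (rule ennreal_leI)
  finally show ?thesis using a by blast
qed

lemma scaled_mgf_le_SUP_below:
  assumes "s \<in> admiss M Y q"
  shows "scaled_mgf s \<le> (SUP a\<in>{0<..<s}. scaled_mgf a)"
proof -
  have s: "0 < s" using admissD[OF assms] by simp
  define u where "u k = s * (1 - 1 / (real k + 2))" for k :: nat
  have u: "0 < u k" "u k < s" for k using s by (auto simp: u_def field_simps add_pos_nonneg)
  have "incseq u" using s by (auto simp: u_def incseq_def intro!: mult_left_mono frac_le)
  have "u \<longlonglongrightarrow> s" unfolding u_def by real_asymp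
  have "scaled_mgf s \<le> (\<integral>\<^sup>+\<omega>. (SUP k. scaled_expq q (u k) (Y \<omega>)) \<partial>M)"
    unfolding scaled_mgf_def
  proof (rule nn_integral_mono_AE)
    show "AE \<omega> in M. scaled_expq q s (Y \<omega>) \<le> (SUP k. scaled_expq q (u k) (Y \<omega>))"
      using AE_admiss_domain[OF assms]
    proof eventually_elim
      case (elim \<omega>)
      have "(\<lambda>k. scaled_expq q (u k) (Y \<omega>)) \<longlonglongrightarrow> scaled_expq q s (Y \<omega>)"
        by (rule tendsto_scaled_expq[OF q_less_1 \<open>u \<longlonglongrightarrow> s\<close> s elim])
      then show ?case by (rule LIMSEQ_le_const2) (auto intro!: exI[of _ 0] SUP_upper)
    qed
  qed
  also have "\<dots> = (SUP k. scaled_mgf (u k))" unfolding scaled_mgf_def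
    using \<open>incseq u\<close> u
    by (intro nn_integral_monotone_convergence_SUP)
       (auto simp: incseq_def le_fun_def intro!: scaled_expq_mono[OF q_less_1])
  also have "\<dots> \<le> (SUP a\<in>{0<..<s}. scaled_mgf a)"
    using u by (auto intro!: SUP_least SUP_upper)
  finally show ?thesis .
qed

lemma INF_above_le_scaled_mgf:
  assumes "0 < s" "s < b" "b \<in> admiss M Y q"
  shows "(INF a\<in>{s<..b}. scaled_mgf a) \<le> scaled_mgf s"
proof -
  define w where "w k = s + (b - s) / (real k + 1)" for k :: nat
  have w: "w k \<in> {s<..b}" for k using assms by (auto simp: w_def field_simps mult_right_mono)
  have "decseq w" using assms by (auto simp: w_def decseq_def intro!: divide_left_mono)
  have "w \<longlonglongrightarrow> s" unfolding w_def by real_asymp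
  have "(INF a\<in>{s<..b}. scaled_mgf a) \<le> (INF k. scaled_mgf (w k))"
    using w by (auto intro!: INF_greatest INF_lower)
  also have "\<dots> = (\<integral>\<^sup>+\<omega>. (INF k. scaled_expq q (w k) (Y \<omega>)) \<partial>M)" unfolding scaled_mgf_def
  proof (rule nn_integral_monotone_convergence_INF_decseq[symmetric, where i = 0])
    show "decseq (\<lambda>k \<omega>. scaled_expq q (w k) (Y \<omega>))"
    proof (intro decseq_SucI le_funI)
      fix k \<omega>
      have "0 < w (Suc k)" "w (Suc k) \<le> w k"
        using w[of "Suc k"] assms(1) \<open>decseq w\<close> by (auto simp: decseq_SucD)
      then show "scaled_expq q (w (Suc k)) (Y \<omega>) \<le> scaled_expq q (w k) (Y \<omega>)"
        by (rule scaled_expq_mono[OF q_less_1])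
    qed
    show "(\<integral>\<^sup>+\<omega>. scaled_expq q (w 0) (Y \<omega>) \<partial>M) < \<infinity>"
      using assms(3) by (simp add: w_def admiss_iff_scaled_mgf scaled_mgf_def)
  qed simp
  also have "\<dots> \<le> scaled_mgf s" unfolding scaled_mgf_def
  proof (rule nn_integral_mono_AE)
    show "AE \<omega> in M. (INF k. scaled_expq q (w k) (Y \<omega>)) \<le> scaled_expq q s (Y \<omega>)"
      using AE_admiss_domain[OF assms(3)]
    proof eventually_elim
      case (elim \<omega>)
      have "1 / b < 1 / s" using assms(1,2) by (simp add: frac_less2)
      with elim have "(1 - q) * Y \<omega> < 1 / s" by linarith
      then have "(\<lambda>k. scaled_expq q (w k) (Y \<omega>)) \<longlonglongrightarrow> scaled_expq q s (Y \<omega>)"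
        by (rule tendsto_scaled_expq[OF q_less_1 \<open>w \<longlonglongrightarrow> s\<close> assms(1)])
      then show ?case by (rule LIMSEQ_le_const) (auto intro!: exI[of _ 0] INF_lower)
    qed
  qed
  finally show ?thesis .
qed

lemma scaled_mgf_attains:
  assumes small: "\<exists>\<epsilon>>0. \<forall>a. 0 < a \<and> a < \<epsilon> \<longrightarrow> mgfq M Y q a < \<infinity>"
    and "0 < V" "b \<in> admiss M Y q" "ennreal V < scaled_mgf b"
  shows "\<exists>s\<in>admiss M Y q. scaled_mgf s = ennreal V"
proof -
  define L where "L = {a. 0 < a \<and> scaled_mgf a \<le> ennreal V}"
  have L_less_b: "a < b" if "a \<in> L" for a
  proof (rule ccontr)
    assume "\<not> a < b"
    then have "scaled_mgf b \<le> scaled_mgf a" using assms(3) by (intro scaled_mgf_mono) (auto simp: admiss_def)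
    then show False using that assms(4) by (auto simp: L_def)
  qed
  obtain a0 where "a0 \<in> L" using scaled_mgf_small[OF small \<open>0 < V\<close>] by (auto simp: L_def)
  have bdd: "bdd_above L" using L_less_b by (auto intro!: bdd_aboveI[of _ b] less_imp_le)
  define s where "s = Sup L"
  have "0 < s" using \<open>a0 \<in> L\<close> bdd cSup_upper[of a0 L] by (auto simp: s_def L_def)
  have "s \<le> b" unfolding s_def using \<open>a0 \<in> L\<close> L_less_b by (intro cSup_least) (auto intro: less_imp_le)
  with \<open>0 < s\<close> have s: "s \<in> admiss M Y q" using assms(3) admiss_downward_closed by blast
  have "scaled_mgf s \<le> (SUP a\<in>{0<..<s}. scaled_mgf a)" using s by (rule scaled_mgf_le_SUP_below)
  also have "\<dots> \<le> ennreal V"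
  proof (rule SUP_least)
    fix a assume a: "a \<in> {0<..<s}"
    then obtain l where "l \<in> L" "a < l"
      using less_cSup_iff[OF _ bdd] \<open>a0 \<in> L\<close> unfolding s_def by auto
    then show "scaled_mgf a \<le> ennreal V"
      using a scaled_mgf_mono[of a l] by (auto simp: L_def)
  qed
  finally have "scaled_mgf s \<le> ennreal V" .
  moreover have "ennreal V \<le> scaled_mgf s"
  proof (cases "s = b")
    case False
    with \<open>s \<le> b\<close> have "s < b" by simp
    have "ennreal V \<le> (INF a\<in>{s<..b}. scaled_mgf a)"
    proof (rule INF_greatest)
      fix a assume a: "a \<in> {s<..b}"
      then have "a \<notin> L" using bdd cSup_upper[of a L] by (auto simp: s_def)
      then show "ennreal V \<le> scaled_mgf a" using a \<open>0 < s\<close> by (auto simp: L_def)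
    qed
    also have "\<dots> \<le> scaled_mgf s" using \<open>0 < s\<close> \<open>s < b\<close> assms(3) by (rule INF_above_le_scaled_mgf)
    finally show ?thesis .
  qed (use assms(4) in simp)
  ultimately show ?thesis using s by auto
qed

lemma thetaq_attains:
  assumes small: "\<exists>\<epsilon>>0. \<forall>a. 0 < a \<and> a < \<epsilon> \<longrightarrow> mgfq M Y q a < \<infinity>"
    and T: "0 < T" "ereal T < theta_bar M Y q"
  shows "\<exists>a\<in>admiss M Y q. thetaq M Y q a = T"
proof -
  obtain b where b: "b \<in> admiss M Y q" "T < thetaq M Y q b"
    using T(2) unfolding theta_bar_def less_SUP_iff by auto
  define V where "V = T powr (1 / (1 - q))"
  have V: "0 < V" using T(1) by (simp add: V_def)
  have "ennreal V < scaled_mgf b"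
    using b T(1) q_less_1 by (simp add: scaled_mgf_eq_thetaq V_def ennreal_less_iff powr_less_mono2)
  then obtain s where s: "s \<in> admiss M Y q" "scaled_mgf s = ennreal V"
    using scaled_mgf_attains[OF small V b(1)] by blast
  then have "thetaq M Y q s = T"
    using thetaq_eq_scaled_mgf[OF s(1)] V T(1) q_less_1 by (simp add: V_def powr_powr)
  with s show ?thesis by blast
qed

lemma expq_neg_legendre:
  assumes "a \<in> admiss M Y q"
  shows "expq q (- (thetaq M Y q a * x - Phiq M Y q (thetaq M Y q a)))
           = mgfq M Y q a / expq (2 - q) (a * x)"
proof -
  define m where "m = enn2real (mgfq M Y q a)"
  have "mgfq M Y q a = ennreal m"
    using assms by (simp add: m_def admiss_def less_top ennreal_enn2real_if)
  moreover have "thetaq M Y q a * x - Phiq M Y q (thetaq M Y q a) = m powr (1 - q) * a * x - lnq q m"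
    unfolding Phiq_thetaq[OF assms] by (simp add: thetaq_def m_def)
  ultimately show ?thesis
    using expq_neg_dual[OF q_less_1 admissD(2)[OF assms]] by (simp add: m_def)
qed

end

lemma ennreal_le_divide_if_mult_le:
  fixes b c p :: ennreal
  assumes "b * p \<le> c" "0 < b" "c < \<infinity>"
  shows "p \<le> c / b"
proof (cases "b = \<infinity>")
  case True
  have "b * p < \<infinity>" using assms(1,3) by (rule le_less_trans)
  then have "p = 0" using True ennreal_mult_less_top[of b p] by simp
  then show ?thesis by (simp only: zero_le)
next
  case False
  with assms(2) have "p = p * b / b" by (simp add: ennreal_mult_divide_eq)
  also have "\<dots> \<le> c / b" using assms(1) by (intro divide_right_mono_ennreal) (simp add: mult.commute)
  finally show ?thesis .
qed

lemma (in prob_space) nn_integral_prod_iid: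
  fixes X :: "nat \<Rightarrow> 'a \<Rightarrow> real" and g :: "real \<Rightarrow> ennreal"
  assumes indep: "indep_vars (\<lambda>_. borel) X UNIV"
    and ident: "\<And>i. distr M borel (X i) = distr M borel (X 1)"
    and [measurable]: "g \<in> borel_measurable borel" and "finite I"
  shows "(\<integral>\<^sup>+\<omega>. (\<Prod>k\<in>I. g (X k \<omega>)) \<partial>M) = (\<integral>\<^sup>+\<omega>. g (X 1 \<omega>) \<partial>M) ^ card I"
proof -
  have [measurable]: "X i \<in> borel_measurable M" for i
    using indep unfolding indep_vars_def by auto
  have same: "(\<integral>\<^sup>+\<omega>. g (X k \<omega>) \<partial>M) = (\<integral>\<^sup>+\<omega>. g (X 1 \<omega>) \<partial>M)" for k
  proof -
    have "(\<integral>\<^sup>+\<omega>. g (X k \<omega>) \<partial>M) = (\<integral>\<^sup>+y. g y \<partial>distr M borel (X k))"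
      by (simp add: nn_integral_distr)
    also have "\<dots> = (\<integral>\<^sup>+\<omega>. g (X 1 \<omega>) \<partial>M)"
      unfolding ident[of k] by (simp add: nn_integral_distr)
    finally show ?thesis .
  qed
  have "indep_vars (\<lambda>_. borel) (\<lambda>k \<omega>. g (X k \<omega>)) I"
    by (rule indep_vars_compose2[OF indep_vars_subset[OF indep]]) auto
  then have "(\<integral>\<^sup>+\<omega>. (\<Prod>k\<in>I. g (X k \<omega>)) \<partial>M) = (\<Prod>k\<in>I. \<integral>\<^sup>+\<omega>. g (X k \<omega>) \<partial>M)"
    using \<open>finite I\<close> by (subst indep_vars_nn_integral) auto
  also have "\<dots> = (\<Prod>k\<in>I. \<integral>\<^sup>+\<omega>. g (X 1 \<omega>) \<partial>M)"
    by (rule prod.cong[OF refl same])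
  finally show ?thesis by simp
qed

lemma (in prob_space) chernoff_bound_expq:
  fixes X :: "nat \<Rightarrow> 'a \<Rightarrow> real"
  assumes indep: "indep_vars (\<lambda>_. borel) X UNIV"
    and ident: "\<And>i. distr M borel (X i) = distr M borel (X 1)"
    and "q < 1" "1 \<le> n" "a \<in> admiss M (X 1) q"
  shows "emeasure M {\<omega> \<in> space M. x \<le> (\<Sum>k=1..n. X k \<omega>) / real n}
           \<le> (mgfq M (X 1) q a / expq (2 - q) (a * x)) ^ n"
proof -
  have [measurable]: "X i \<in> borel_measurable M" for i
    using indep unfolding indep_vars_def by auto
  define E where "E = {\<omega> \<in> space M. x \<le> (\<Sum>k=1..n. X k \<omega>) / real n}"
  define B where "B = expq (2 - q) (a * x) ^ n"
  have "0 < a" using assms(5) by (simp add: admiss_def)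
  have "B \<le> (\<Prod>k\<in>{1..n}. expq (2 - q) (a * X k \<omega>))" if "\<omega> \<in> E" for \<omega>
  proof -
    have "x \<le> (\<Sum>k=1..n. X k \<omega>) / real n" using that by (simp add: E_def)
    then have "a * x \<le> a * ((\<Sum>k=1..n. X k \<omega>) / real n)"
      by (rule mult_left_mono) (use \<open>0 < a\<close> in simp)
    also have "\<dots> = (\<Sum>k=1..n. a * X k \<omega>) / card {1..n}"
      by (simp add: sum_distrib_left)
    finally have "B \<le> expq (2 - q) ((\<Sum>k=1..n. a * X k \<omega>) / card {1..n}) ^ card {1..n}"
      unfolding B_def by (auto intro!: power_mono monoD[OF mono_expq])
    also have "\<dots> \<le> (\<Prod>k\<in>{1..n}. expq (2 - q) (a * X k \<omega>))"
      using assms(3,4) by (intro expq_mean_power_le_prod) auto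
    finally show ?thesis .
  qed
  then have "B * emeasure M E \<le> (\<integral>\<^sup>+\<omega>. (\<Prod>k\<in>{1..n}. expq (2 - q) (a * X k \<omega>)) \<partial>M)"
    by (subst nn_integral_cmult_indicator[symmetric]) (auto intro!: nn_integral_mono simp: E_def indicator_def)
  also have "\<dots> = mgfq M (X 1) q a ^ n"
    using nn_integral_prod_iid[OF indep ident, of "\<lambda>y. expq (2 - q) (a * y)" "{1..n}"]
    by (simp add: mgfq_def)
  finally have "emeasure M E \<le> mgfq M (X 1) q a ^ n / B"
  proof (rule ennreal_le_divide_if_mult_le)
    have "expq (2 - q) (a * x) \<noteq> 0" using expq_pos[of "2 - q" "a * x"] assms(3) by auto
    then show "0 < B" unfolding B_def zero_less_iff_neq_zero by simp
    show "mgfq M (X 1) q a ^ n < \<infinity>" using assms(5) by (simp add: admiss_def power_less_top_ennreal)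
  qed
  then show ?thesis by (simp add: E_def B_def power_divide_distrib_ennreal)
qed

theorem theorem1:
  fixes M :: "'a measure" and X :: "nat \<Rightarrow> 'a \<Rightarrow> real" and q x :: real and n :: nat
  assumes "prob_space M"
    and "prob_space.indep_vars M (\<lambda>_. borel) X UNIV"
    and "\<And>i. distr M borel (X i) = distr M borel (X 1)"
    and "0 < q" and "q < 1"
    and "\<exists>\<epsilon>>0. \<forall>a. 0 < a \<and> a < \<epsilon> \<longrightarrow> mgfq M (X 1) q a < \<infinity>"
    and "n \<ge> 1"
  shows "emeasure M {\<omega> \<in> space M. (\<Sum>k=1..n. X k \<omega>) / real n \<ge> x}
           \<le> (expq_ereal q (- Iq M (X 1) q x)) ^ n"
proof -
  interpret prob_space M by (rule assms(1))
  have "X 1 \<in> borel_measurable M"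
    using assms(2) unfolding indep_vars_def by simp
  then interpret q_moment M "X 1" q using assms(5) by unfold_locales
  have "emeasure M {\<omega> \<in> space M. (\<Sum>k=1..n. X k \<omega>) / real n \<ge> x}
      \<le> expq q (- (\<theta> * x - Phiq M (X 1) q \<theta>)) ^ n"
    if \<theta>: "\<theta> \<in> {\<theta>. 0 < \<theta> \<and> ereal \<theta> < theta_bar M (X 1) q}" for \<theta>
  proof -
    obtain a where a: "a \<in> admiss M (X 1) q" "thetaq M (X 1) q a = \<theta>"
      using thetaq_attains[OF assms(6)] \<theta> by blast
    then show ?thesis
      using chernoff_bound_expq[OF assms(2,3,5,7) a(1), of x] expq_neg_legendre[OF a(1), of x] by simp
  qed
  then show ?thesis
    unfolding Iq_def using assms(5,7) by (intro le_expq_ereal_neg_SUP) auto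
qed

end
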